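(* Let $p\ge 2$ and $d\in\{0,1,\dots,9\}$ be integers, and let $n\ge 10^{p-1}$ be an integer. Let $k=\max\{i\in\mathbb N:10^{i+p}\le n\}$, with $k=-1$ if this set is empty, and let $$l=\Big\lfloor\frac{n-(10^{p-1}+d)10^{k+1}}{10^{k+2}}\Big\rfloor+10^{p-2}.$$ Then \begin{align*} P_{(d,n,p)}=\frac{1}{n+1-10^{p-1}}\Big(&\sum_{i=0}^k\Big(\sum_{j=10^{p-2}}^{10^{p-1}-1}\ \sum_{b=(10j+d)10^i}^{(10j+(d+1))10^i-1}\frac{b-((9j+d)10^i+10^{p-2}-1)}{b+1-10^{p-1}}\\ &+\sum_{j=10^{p-2}-1}^{10^{p-1}-1}\ \sum_{a=\max(10^{p+i-1},(10j+(d+1))10^i)}^{\min(10^{p+i}-1,(10(j+1)+d)10^i-1)}\frac{10^i(j+1)-10^{p-2}}{a+1-10^{p-1}}\Big)+ r_{(n,d,p)}\Big), \end{align*} where, if the $p$-th digit of $n$ is $d$, \begin{align*} r_{(n,d,p)}=&\sum_{j=10^{p-2}}^{l}\ \sum_{b=(10j+d)10^{k+1}}^{\min(n,(10j+(d+1))10^{k+1}-1)}\frac{b-((9j+d)10^{k+1}+10^{p-2}-1)}{b+1-10^{p-1}}\\ &+\sum_{j=10^{p-2}-1}^{l-1}\ \sum_{a=\max(10^{p+k},(10j+(d+1))10^{k+1})}^{(10(j+1)+d)10^{k+1}-1}\frac{10^{k+1}(j+1)-10^{p-2}}{a+1-10^{p-1}}, \end{align*} and, if the $p$-th digit of $n$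 is different from $d$, \begin{align*} r_{(n,d,p)}=&\sum_{j=10^{p-2}}^{l}\ \sum_{b=(10j+d)10^{k+1}}^{(10j+(d+1))10^{k+1}-1}\frac{b-((9j+d)10^{k+1}+10^{p-2}-1)}{b+1-10^{p-1}}\\ &+\sum_{j=10^{p-2}-1}^{l}\ \sum_{a=\max(10^{p+k},(10j+(d+1))10^{k+1})}^{\min(n,(10(j+1)+d)10^{k+1}-1)}\frac{10^{k+1}(j+1)-10^{p-2}}{a+1-10^{p-1}}. \end{align*}
   Context: For an integer $x\ge 10^{p-1}$ (so $x$ has at least $p$ decimal digits), the "$p$-th digit of $x$" is the $p$-th digit of its decimal expansion counted from the left (most significant digit first). For integers $p\ge2$, $d\in\{0,\dots,9\}$ and $m\ge 10^{p-1}$, let $N_d(m)$ be the number of integers $x$ with $10^{p-1}\le x\le m$ whose $p$-th digit is $d$. For $n\ge 10^{p-1}$ the model is the two-stage random experiment: first choose $m$ uniformly at random in $\{10^{p-1},\dots,n\}$, then choose $x$ uniformly at random in $\{10^{p-1},\dots,m\}$. $P_{(d,n,p)}$ denotes the probability that the $p$-th digit of $x$ is $d$, i.e. $$P_{(d,n,p)}=\frac{1}{n+1-10^{p-1}}\sum_{m=10^{p-1}}^{n}\frac{N_d(m)}{m+1-10^{p-1}}.$$ Sums whose upper index is smaller than the lower index (e.g. $\sum_{i=0}^{-1}$) are zero. *)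

theory Defs
  imports Complex_Main
begin

definition ndigits :: "nat \<Rightarrow> nat" where
  "ndigits x = (LEAST L. x < 10 ^ L)"

definition pth_digit :: "nat \<Rightarrow> nat \<Rightarrow> nat" where
  "pth_digit p x = (x div 10 ^ (ndigits x - p)) mod 10"

definition Ncount :: "nat \<Rightarrow> nat \<Rightarrow> nat \<Rightarrow> nat" where
  "Ncount p d m = card {x. 10 ^ (p - 1) \<le> x \<and> x \<le> m \<and> pth_digit p x = d}"

definition Pprob :: "nat \<Rightarrow> nat \<Rightarrow> nat \<Rightarrow> real" where
  "Pprob d n p = (1 / (real n + 1 - 10 ^ (p - 1))) *
     (\<Sum>m = 10 ^ (p - 1)..n. real (Ncount p d m) / (real m + 1 - 10 ^ (p - 1)))"

end

theory Submission
  imports Defs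
begin

(* Numbers with exactly p + t digits form the t-th level; there the p-th digit of m
   is (m div 10^t) mod 10. Cut the integers into blocks [(10j+d)10^t, (10j+d+10)10^t): in each
   block the first 10^t numbers have digit d and the remaining 9*10^t do not. Counting block by
   block, and adding the 10^(p-2)(10^t - 1) numbers with digit d on the lower levels, N_d(m) is
   m - ((9j+d)10^t + 10^(p-2) - 1) on the first part of block j and 10^t(j+1) - 10^(p-2) on the
   second. Summing N_d(m)/(m+1-10^(p-1)) over the blocks of the full levels t <= k and of the top
   level (cut off at n) gives the formula; the p-th digit of n decides which part of the last
   block is cut. *)

lemma div_eq_iff_bounds:
  fixes x q T :: int
  assumes "T > 0"
  shows "x div T = q \<longleftrightarrow> q * T \<le> x \<and> x < (q + 1) * T"
proof
  assume "x div T = q"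
  then show "q * T \<le> x \<and> x < (q + 1) * T"
    using div_mult_mod_eq[of x T] pos_mod_bound[OF assms, of x] pos_mod_sign[OF assms, of x]
    by (auto simp: algebra_simps)
next
  assume "q * T \<le> x \<and> x < (q + 1) * T"
  then have "(x - q * T) div T = 0"
    by (intro div_pos_pos_trivial) (auto simp: algebra_simps)
  then show "x div T = q"
    using assms by (metis add.right_neutral diff_add_cancel div_mult_self1 less_irrefl)
qed

lemma div_mod_eq_iff_bounds:
  fixes x q T :: int
  assumes "T > 0" and "q * T \<le> x" and "x < (q + 1) * T"
  shows "x div T = q" and "x mod T = x - q * T"
proof -
  show "x div T = q" using div_eq_iff_bounds assms by blast
  then show "x mod T = x - q * T" by (simp add: minus_div_mult_eq_mod[symmetric])
qed

lemma digit_eq_iff_mod: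
  fixes T d x :: int
  assumes T: "T > 0" and d: "0 \<le> d" "d \<le> 9"
  shows "x div T mod 10 = d \<longleftrightarrow> (x - d * T) mod (10 * T) < T"
proof -
  define e where "e = (x div T - d) mod 10"
  have "(x - d * T) div T = x div T - d"
    using T by (simp add: div_mult_self1[of T x "- d", simplified, symmetric] algebra_simps)
  moreover have "(x - d * T) mod T = x mod T"
    using mod_mult_self1[of x "- d" T] by simp
  ultimately have split: "(x - d * T) mod (10 * T) = T * e + x mod T"
    using zmod_zmult2_eq[of 10 "x - d * T" T] by (simp add: mult.commute e_def)
  have digit: "x div T mod 10 = d \<longleftrightarrow> e = 0"
    using d by (simp add: e_def mod_eq_dvd_iff[symmetric] dvd_eq_mod_eq_0[symmetric])
  have rem: "0 \<le> x mod T" "x mod T < T" using T by simp_all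
  show ?thesis
  proof (cases "e = 0")
    case True
    then show ?thesis using digit split rem by simp
  next
    case False
    then have "T \<le> T * e"
      using T pos_mod_sign[of 10 "x div T - d"] by (simp add: e_def mult_le_cancel_left1)
    then have "\<not> (x - d * T) mod (10 * T) < T" using split rem by linarith
    then show ?thesis using False digit by simp
  qed
qed

(* Up to an additive constant, digit_count T d m counts the x <= m with x div T mod 10 = d:
   each block [(10j+d)T, (10j+d+10)T) below m contributes T, and the block of m contributes
   its elements <= m among its first T. *)
definition digit_count :: "int \<Rightarrow> int \<Rightarrow> int \<Rightarrow> int" where
  "digit_count T d m = (m - d * T) div (10 * T) * T + min T ((m - d * T) mod (10 * T) + 1)"

lemma digit_count_succ:
  fixes T d m :: int
  assumes T: "T > 0"
  shows "digit_count T d (m + 1) =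
    digit_count T d m + (if (m + 1 - d * T) mod (10 * T) < T then 1 else 0)"
proof -
  define y q r where "y = m - d * T" and "q = y div (10 * T)" and "r = y mod (10 * T)"
  have y: "y = q * (10 * T) + r"
    using div_mult_mod_eq[of y "10 * T"] by (simp add: q_def r_def)
  have r: "0 \<le> r" "r < 10 * T"
    using T by (simp_all add: r_def)
  have m1: "m + 1 - d * T = y + 1" by (simp add: y_def)
  have dc: "digit_count T d m = q * T + min T (r + 1)"
    unfolding digit_count_def q_def r_def y_def ..
  have dc1: "digit_count T d (m + 1) = (y + 1) div (10 * T) * T + min T ((y + 1) mod (10 * T) + 1)"
    unfolding digit_count_def m1 ..
  show ?thesis
  proof (cases "r + 1 = 10 * T")
    case True
    have "(y + 1) div (10 * T) = q + 1" "(y + 1) mod (10 * T) = 0"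
      using div_mod_eq_iff_bounds[of "10 * T" "q + 1" "y + 1"] T True y
      by (simp_all add: algebra_simps)
    then show ?thesis
      unfolding dc dc1 m1 using T True by (simp add: algebra_simps)
  next
    case False
    have "(y + 1) div (10 * T) = q" "(y + 1) mod (10 * T) = r + 1"
      using div_mod_eq_iff_bounds[of "10 * T" q "y + 1"] T r y False
      by (simp_all add: algebra_simps)
    then show ?thesis
      unfolding dc dc1 m1 by simp
  qed
qed

lemma digit_count_on_block:
  fixes T d j m :: int
  assumes "T > 0" and "(10 * j + d) * T \<le> m" and "m \<le> (10 * (j + 1) + d) * T - 1"
  shows "digit_count T d m = j * T + min T (m - (10 * j + d) * T + 1)"
proof -
  have "(m - d * T) div (10 * T) = j" "(m - d * T) mod (10 * T) = m - (10 * j + d) * T"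
    using div_mod_eq_iff_bounds[of "10 * T" j "m - d * T"] assms by (simp_all add: algebra_simps)
  then show ?thesis by (simp add: digit_count_def)
qed

lemma digit_count_before_level:
  fixes T d c :: int
  assumes T: "T > 0" and d: "0 \<le> d" "d \<le> 9"
  shows "digit_count T d (10 * c * T - 1) = c * T"
proof -
  have "(10 * (c - 1) + d) * T \<le> (10 * c - 1) * T" using T d by (intro mult_right_mono) auto
  moreover have "(10 * c - 1) * T = 10 * c * T - T" "(10 * (c - 1 + 1) + d) * T = 10 * c * T + d * T"
    by (simp_all add: algebra_simps)
  moreover have "0 \<le> d * T" using T d by simp
  ultimately have "digit_count T d (10 * c * T - 1)
      = (c - 1) * T + min T (10 * c * T - 1 - (10 * (c - 1) + d) * T + 1)"
    using digit_count_on_block[OF T, of "c - 1" d "10 * c * T - 1"] T by linarith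
  also have "10 * c * T - 1 - (10 * (c - 1) + d) * T + 1 = (10 - d) * T"
    by (simp add: algebra_simps)
  also have "min T ((10 - d) * T) = T" using T d by simp
  finally show ?thesis by (simp add: algebra_simps)
qed

lemma ndigits_eqI:
  assumes "10 ^ (q - 1) \<le> x" and "x < 10 ^ q"
  shows "ndigits x = q"
  unfolding ndigits_def
proof (rule Least_equality)
  show "x < 10 ^ q" by fact
  fix L assume "x < 10 ^ L"
  show "q \<le> L"
  proof (rule ccontr)
    assume "\<not> q \<le> L"
    then have "(10::nat) ^ L \<le> 10 ^ (q - 1)" by (intro power_increasing) auto
    then show False using assms \<open>x < 10 ^ L\<close> by linarith
  qed
qed

lemma int_pth_digit_eq:
  assumes "10 ^ (p + t - 1) \<le> x" and "x < 10 ^ (p + t)"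
  shows "int (pth_digit p x) = int x div 10 ^ t mod 10"
  unfolding pth_digit_def ndigits_eqI[OF assms] by (simp add: zdiv_int zmod_int)

lemma Ncount_eq_0:
  assumes "m < 10 ^ (p - 1)"
  shows "Ncount p d m = 0"
  using assms unfolding Ncount_def by auto

lemma Ncount_Suc:
  assumes "10 ^ (p - 1) \<le> Suc m"
  shows "Ncount p d (Suc m) = Ncount p d m + (if pth_digit p (Suc m) = d then 1 else 0)"
proof -
  let ?S = "\<lambda>m. {x. 10 ^ (p - 1) \<le> x \<and> x \<le> m \<and> pth_digit p x = d}"
  have "?S (Suc m) = (if pth_digit p (Suc m) = d then insert (Suc m) (?S m) else ?S m)"
    using assms le_Suc_eq by auto
  moreover have "finite (?S m)" "Suc m \<notin> ?S m" by auto
  ultimately show ?thesis unfolding Ncount_def by simp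
qed

lemma power_ten_shift:
  assumes "p \<ge> 2"
  shows "(10 :: 'a :: comm_semiring_1) ^ (p + t - 1) = 10 * 10 ^ (p - 2) * 10 ^ t"
proof -
  have "p + t - 1 = Suc (p - 2) + t" using assms by simp
  then show ?thesis by (simp only: power_add power_Suc)
qed

lemma Ncount_on_level:
  fixes p d t m :: nat
  assumes p: "p \<ge> 2" and d: "d \<le> 9"
    and start: "int (Ncount p d (10 ^ (p + t - 1) - 1)) = 10 ^ (p - 2) * 10 ^ t - 10 ^ (p - 2)"
    and lo: "10 ^ (p + t - 1) - 1 \<le> m" and hi: "m < 10 ^ (p + t)"
  shows "int (Ncount p d m) = digit_count (10 ^ t) (int d) (int m) - 10 ^ (p - 2)"
  using lo hi
proof (induction m rule: dec_induct)
  case base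
  have "int (10 ^ (p + t - 1) - 1) = 10 * 10 ^ (p - 2) * 10 ^ t - 1"
    using power_ten_shift[OF p, where 'a = int, of t] by (simp add: of_nat_diff)
  then show ?case
    using start digit_count_before_level[of "10 ^ t" "int d" "10 ^ (p - 2)"] d by simp
next
  case (step n)
  have level: "10 ^ (p + t - 1) \<le> Suc n" "Suc n < 10 ^ (p + t)"
    using step by simp_all
  have "10 ^ (p - 1) \<le> (10::nat) ^ (p + t - 1)" by (intro power_increasing) auto
  then have "Ncount p d (Suc n) = Ncount p d n + (if pth_digit p (Suc n) = d then 1 else 0)"
    using Ncount_Suc level by (meson order.trans)
  moreover have "int (pth_digit p (Suc n)) = (int n + 1) div 10 ^ t mod 10"
    using int_pth_digit_eq[OF level] by (simp add: add.commute)
  then have "(pth_digit p (Suc n) = d) \<longleftrightarrow> (int n + 1) div 10 ^ t mod 10 = int d"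
    by (metis of_nat_eq_iff)
  moreover have "int (Ncount p d n) = digit_count (10 ^ t) (int d) (int n) - 10 ^ (p - 2)"
    using step by simp
  ultimately show ?case
    using digit_count_succ[of "10 ^ t" "int d" "int n"]
      digit_eq_iff_mod[of "10 ^ t" "int d" "int n + 1"] d by (simp add: add.commute)
qed

lemma Ncount_before_level:
  assumes p: "p \<ge> 2" and d: "d \<le> 9"
  shows "int (Ncount p d (10 ^ (p + t - 1) - 1)) = 10 ^ (p - 2) * 10 ^ t - 10 ^ (p - 2)"
proof (induction t)
  case 0
  show ?case using Ncount_eq_0[of "10 ^ (p - 1) - 1" p d] by simp
next
  case (Suc t)
  have "int (Ncount p d (10 ^ (p + t) - 1))
      = digit_count (10 ^ t) (int d) (int (10 ^ (p + t) - 1)) - 10 ^ (p - 2)"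
    by (rule Ncount_on_level[OF p d Suc.IH]) (auto intro!: diff_le_mono power_increasing)
  moreover have "int (10 ^ (p + t) - 1) = 10 * (10 * 10 ^ (p - 2)) * 10 ^ t - 1"
    using power_ten_shift[OF p, where 'a = int, of "Suc t"] by (simp add: of_nat_diff)
  ultimately show ?case
    using digit_count_before_level[of "10 ^ t" "int d" "10 * 10 ^ (p - 2)"] d by simp
qed

lemma Ncount_eq_digit_count:
  assumes "p \<ge> 2" and "d \<le> 9" and "10 ^ (p + t - 1) - 1 \<le> m" and "m < 10 ^ (p + t)"
  shows "int (Ncount p d m) = digit_count (10 ^ t) (int d) (int m) - 10 ^ (p - 2)"
  using Ncount_on_level[OF assms(1,2) Ncount_before_level[OF assms(1,2)] assms(3,4)] .

lemma sum_Int_atLeastAtMost_split: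
  fixes g :: "int \<Rightarrow> 'a::comm_monoid_add"
  assumes "x \<le> y" and "y \<le> z + 1"
  shows "sum g (S \<inter> {x..z}) = sum g (S \<inter> {x..y - 1}) + sum g (S \<inter> {y..z})"
proof -
  have "S \<inter> {x..z} = (S \<inter> {x..y - 1}) \<union> (S \<inter> {y..z})" using assms by auto
  moreover have "(S \<inter> {x..y - 1}) \<inter> (S \<inter> {y..z}) = {}" by auto
  ultimately show ?thesis by (simp add: sum.union_disjoint)
qed

lemma sum_Int_blocks:
  fixes g :: "int \<Rightarrow> 'a::comm_monoid_add" and s :: "int \<Rightarrow> int"
  assumes "mono s" and "a - 1 \<le> b"
  shows "sum g (S \<inter> {s a..s (b + 1) - 1}) = (\<Sum>j\<in>{a..b}. sum g (S \<inter> {s j..s (j + 1) - 1}))"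
  using assms(2)
proof (induction b rule: int_ge_induct)
  case base
  then show ?case by simp
next
  case (step b)
  have "s a \<le> s (b + 1)" "s (b + 1) \<le> s (b + 1 + 1)"
    using step.hyps \<open>mono s\<close> by (simp_all add: monoD)
  then have "sum g (S \<inter> {s a..s (b + 1 + 1) - 1})
      = sum g (S \<inter> {s a..s (b + 1) - 1}) + sum g (S \<inter> {s (b + 1)..s (b + 1 + 1) - 1})"
    by (intro sum_Int_atLeastAtMost_split) auto
  moreover have "{a..b + 1} = insert (b + 1) {a..b}" using step.hyps by auto
  ultimately show ?case using step.IH by (simp add: add.commute)
qed

lemma sum_level_blocks:
  fixes g :: "int \<Rightarrow> 'a::comm_monoid_add" and T d c L U J :: int
  assumes T: "T > 0" and d: "0 \<le> d" "d \<le> 9" and L: "L = 10 * c * T"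
    and U: "L \<le> U" "U < (10 * (J + 1) + d) * T"
  shows "sum g {L..U} =
      (\<Sum>j\<in>{c..J}. sum g {(10 * j + d) * T..min U ((10 * j + (d + 1)) * T - 1)})
    + (\<Sum>j\<in>{c - 1..J}. sum g {max L ((10 * j + (d + 1)) * T)..min U ((10 * (j + 1) + d) * T - 1)})"
proof -
  define s where "s j = (10 * j + d) * T" for j
  define m where "m j = (10 * j + (d + 1)) * T" for j
  have "mono s" unfolding s_def using T by (intro monoI mult_right_mono) auto
  have start: "s (c - 1) \<le> L" unfolding s_def L using T d by (intro mult_right_mono) auto
  then have "s (c - 1) < s (J + 1)" using U by (simp add: s_def)
  then have J: "c - 1 \<le> J" using T by (simp add: s_def mult_less_cancel_right)
  have "sum g {L..U} = sum g ({L..U} \<inter> {s (c - 1)..s (J + 1) - 1})"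
    using start U by (simp add: s_def)
  also have "\<dots> = (\<Sum>j\<in>{c - 1..J}. sum g ({L..U} \<inter> {s j..s (j + 1) - 1}))"
    by (rule sum_Int_blocks[OF \<open>mono s\<close>]) (use J in simp)
  also have "\<dots> = (\<Sum>j\<in>{c - 1..J}. sum g ({L..U} \<inter> {s j..m j - 1}))
                + (\<Sum>j\<in>{c - 1..J}. sum g ({L..U} \<inter> {m j..s (j + 1) - 1}))"
    unfolding sum.distrib[symmetric] using T
    by (intro sum.cong refl sum_Int_atLeastAtMost_split) (simp_all add: s_def m_def algebra_simps)
  also have "(\<Sum>j\<in>{c - 1..J}. sum g ({L..U} \<inter> {s j..m j - 1}))
           = (\<Sum>j\<in>{c..J}. sum g {s j..min U (m j - 1)})"
  proof -
    have "m (c - 1) \<le> L" unfolding m_def L using T d by (intro mult_right_mono) auto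
    moreover have "L \<le> s j" if "c \<le> j" for j
      unfolding s_def L using T d that by (intro mult_right_mono) auto
    moreover have "{c - 1..J} = insert (c - 1) {c..J}" using J by auto
    ultimately show ?thesis by (auto intro!: sum.cong)
  qed
  finally show ?thesis by (simp add: s_def m_def)
qed

definition prob_summand :: "nat \<Rightarrow> nat \<Rightarrow> int \<Rightarrow> real" where
  "prob_summand p d m = real (Ncount p d (nat m)) / real_of_int (m + 1 - 10 ^ (p - 1))"

(* On level t, with T = 10^t, the numerators are the values of N_d on the two parts
   [(10j+d)T, (10j+d+1)T) and [(10j+d+1)T, (10j+d+10)T) of block j. *)
definition digit_block_term :: "nat \<Rightarrow> nat \<Rightarrow> int \<Rightarrow> int \<Rightarrow> int \<Rightarrow> real" where
  "digit_block_term p d T j b =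
     real_of_int (b - ((9 * j + int d) * T + 10 ^ (p - 2) - 1)) / real_of_int (b + 1 - 10 ^ (p - 1))"

definition other_block_term :: "nat \<Rightarrow> int \<Rightarrow> int \<Rightarrow> int \<Rightarrow> real" where
  "other_block_term p T j a =
     real_of_int (T * (j + 1) - 10 ^ (p - 2)) / real_of_int (a + 1 - 10 ^ (p - 1))"

lemma prob_summand_on_level:
  assumes p: "p \<ge> 2" and d: "d \<le> 9"
    and m: "10 ^ (p + t - 1) \<le> m" "m \<le> 10 ^ (p + t) - 1"
  shows "prob_summand p d m =
    real_of_int (digit_count (10 ^ t) (int d) m - 10 ^ (p - 2)) / real_of_int (m + 1 - 10 ^ (p - 1))"
proof -
  have "m \<ge> 0" using m(1) by (rule order_trans[rotated]) simp
  have "10 ^ (p + t - 1) \<le> nat m" "nat m < 10 ^ (p + t)"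
    using m \<open>m \<ge> 0\<close> by (simp_all add: le_nat_iff nat_less_iff)
  then have "10 ^ (p + t - 1) - 1 \<le> nat m" "nat m < 10 ^ (p + t)" by linarith+
  from Ncount_eq_digit_count[OF p d this] \<open>m \<ge> 0\<close> show ?thesis
    unfolding prob_summand_def by (metis int_nat_eq of_int_of_nat_eq)
qed

lemma prob_summand_on_digit_block:
  assumes p: "p \<ge> 2" and d: "d \<le> 9"
    and level: "10 ^ (p + t - 1) \<le> b" "b \<le> 10 ^ (p + t) - 1"
    and block: "(10 * j + int d) * 10 ^ t \<le> b" "b \<le> (10 * j + (int d + 1)) * 10 ^ t - 1"
  shows "prob_summand p d b = digit_block_term p d (10 ^ t) j b"
proof -
  have "digit_count (10 ^ t) (int d) b = j * 10 ^ t + min (10 ^ t) (b - (10 * j + int d) * 10 ^ t + 1)"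
    using block by (intro digit_count_on_block) (simp_all add: algebra_simps)
  also have "\<dots> = b - (9 * j + int d) * 10 ^ t + 1"
    using block by (simp add: algebra_simps)
  finally have "digit_count (10 ^ t) (int d) b - 10 ^ (p - 2)
      = b - ((9 * j + int d) * 10 ^ t + 10 ^ (p - 2) - 1)"
    by simp
  then show ?thesis
    unfolding prob_summand_on_level[OF p d level] digit_block_term_def by simp
qed

lemma prob_summand_on_other_block:
  assumes p: "p \<ge> 2" and d: "d \<le> 9"
    and level: "10 ^ (p + t - 1) \<le> a" "a \<le> 10 ^ (p + t) - 1"
    and block: "(10 * j + (int d + 1)) * 10 ^ t \<le> a" "a \<le> (10 * (j + 1) + int d) * 10 ^ t - 1"
  shows "prob_summand p d a = other_block_term p (10 ^ t) j a"
proof -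
  have "digit_count (10 ^ t) (int d) a = j * 10 ^ t + min (10 ^ t) (a - (10 * j + int d) * 10 ^ t + 1)"
    using block by (intro digit_count_on_block) (simp_all add: algebra_simps)
  also have "\<dots> = 10 ^ t * (j + 1)"
    using block by (simp add: algebra_simps)
  finally show ?thesis
    unfolding prob_summand_on_level[OF p d level] other_block_term_def by simp
qed

lemma sum_prob_summand_level:
  assumes p: "p \<ge> 2" and d: "d \<le> 9"
    and U: "10 ^ (p + t - 1) \<le> U" "U \<le> 10 ^ (p + t) - 1" "U < (10 * (J + 1) + int d) * 10 ^ t"
  shows "(\<Sum>m\<in>{10 ^ (p + t - 1)..U}. prob_summand p d m) =
      (\<Sum>j\<in>{10 ^ (p - 2)..J}.
         \<Sum>b\<in>{(10 * j + int d) * 10 ^ t..min U ((10 * j + (int d + 1)) * 10 ^ t - 1)}.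
         digit_block_term p d (10 ^ t) j b)
    + (\<Sum>j\<in>{10 ^ (p - 2) - 1..J}.
         \<Sum>a\<in>{max (10 ^ (p + t - 1)) ((10 * j + (int d + 1)) * 10 ^ t)
              ..min U ((10 * (j + 1) + int d) * 10 ^ t - 1)}.
         other_block_term p (10 ^ t) j a)"
proof -
  have L: "(10::int) ^ (p + t - 1) = 10 * 10 ^ (p - 2) * 10 ^ t" by (rule power_ten_shift[OF p])
  have T: "(10::int) ^ t > 0" and d': "0 \<le> int d" "int d \<le> 9" using d by simp_all
  show ?thesis
    unfolding sum_level_blocks[OF T d' L U(1,3)]
  proof (intro arg_cong2[where f = "(+)"] sum.cong refl)
    fix j b
    assume j: "j \<in> {10 ^ (p - 2)..J}"
      and b: "b \<in> {(10 * j + int d) * 10 ^ t..min U ((10 * j + (int d + 1)) * 10 ^ t - 1)}"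
    have "10 * 10 ^ (p - 2) * 10 ^ t \<le> (10 * j + int d) * (10::int) ^ t"
      using j by (intro mult_right_mono) auto
    moreover have "(10 * j + int d) * 10 ^ t \<le> b" using b by simp
    ultimately have "10 ^ (p + t - 1) \<le> b" unfolding L by (rule order_trans)
    then show "prob_summand p d b = digit_block_term p d (10 ^ t) j b"
      using b U by (intro prob_summand_on_digit_block[OF p d]) auto
  next
    fix j a
    assume "a \<in> {max (10 ^ (p + t - 1)) ((10 * j + (int d + 1)) * 10 ^ t)
                 ..min U ((10 * (j + 1) + int d) * 10 ^ t - 1)}"
    then show "prob_summand p d a = other_block_term p (10 ^ t) j a"
      using U by (intro prob_summand_on_other_block[OF p d]) auto
  qed
qed

lemma sum_digit_blocks_drop_min:
  fixes f :: "int \<Rightarrow> int \<Rightarrow> 'a::comm_monoid_add" and T d U J :: int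
  assumes T: "T > 0" and J: "(10 * J + (d + 1)) * T \<le> U + 1"
  shows "(\<Sum>j\<in>{a..J}. \<Sum>b\<in>{(10 * j + d) * T..min U ((10 * j + (d + 1)) * T - 1)}. f j b)
       = (\<Sum>j\<in>{a..J}. \<Sum>b\<in>{(10 * j + d) * T..(10 * j + (d + 1)) * T - 1}. f j b)"
proof (intro sum.cong refl)
  fix j assume "j \<in> {a..J}"
  then have "(10 * j + (d + 1)) * T \<le> (10 * J + (d + 1)) * T" using T by (intro mult_right_mono) auto
  then show "{(10 * j + d) * T..min U ((10 * j + (d + 1)) * T - 1)}
           = {(10 * j + d) * T..(10 * j + (d + 1)) * T - 1}"
    using J by simp
qed

lemma sum_other_blocks_drop_last:
  fixes f :: "int \<Rightarrow> int \<Rightarrow> 'a::comm_monoid_add" and T d L U J :: int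
  assumes T: "T > 0" and J: "U < (10 * J + (d + 1)) * T" "(10 * J + d) * T \<le> U + 1"
  shows "(\<Sum>j\<in>{a..J}. \<Sum>x\<in>{max L ((10 * j + (d + 1)) * T)..min U ((10 * (j + 1) + d) * T - 1)}. f j x)
       = (\<Sum>j\<in>{a..J - 1}. \<Sum>x\<in>{max L ((10 * j + (d + 1)) * T)..(10 * (j + 1) + d) * T - 1}. f j x)"
proof -
  have "(\<Sum>j\<in>{a..J}. \<Sum>x\<in>{max L ((10 * j + (d + 1)) * T)..min U ((10 * (j + 1) + d) * T - 1)}. f j x)
      = (\<Sum>j\<in>{a..J - 1}. \<Sum>x\<in>{max L ((10 * j + (d + 1)) * T)..min U ((10 * (j + 1) + d) * T - 1)}. f j x)"
    using J(1) by (intro sum.mono_neutral_right) auto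
  also have "\<dots> = (\<Sum>j\<in>{a..J - 1}. \<Sum>x\<in>{max L ((10 * j + (d + 1)) * T)..(10 * (j + 1) + d) * T - 1}. f j x)"
  proof (intro sum.cong refl)
    fix j assume "j \<in> {a..J - 1}"
    then have "(10 * (j + 1) + d) * T \<le> (10 * J + d) * T" using T by (intro mult_right_mono) auto
    then show "{max L ((10 * j + (d + 1)) * T)..min U ((10 * (j + 1) + d) * T - 1)}
             = {max L ((10 * j + (d + 1)) * T)..(10 * (j + 1) + d) * T - 1}"
      using J(2) by simp
  qed
  finally show ?thesis .
qed

lemma digit_block_of:
  fixes T d x l :: int
  assumes T: "T > 0" and d: "0 \<le> d" "d \<le> 9" and l: "l = (x - d * T) div (10 * T)"
  shows "(10 * l + d) * T \<le> x" and "x < (10 * (l + 1) + d) * T"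
    and "x div T mod 10 = d \<longleftrightarrow> x < (10 * l + (d + 1)) * T"
proof -
  have bounds: "l * (10 * T) \<le> x - d * T" "x - d * T < (l + 1) * (10 * T)"
    using div_eq_iff_bounds[of "10 * T" "x - d * T" l] T l by simp_all
  then show "(10 * l + d) * T \<le> x" "x < (10 * (l + 1) + d) * T"
    by (simp_all add: algebra_simps)
  have "(x - d * T) mod (10 * T) = x - d * T - l * (10 * T)"
    using div_mod_eq_iff_bounds(2)[of "10 * T" l "x - d * T"] T bounds by simp
  then have "(x - d * T) mod (10 * T) < T \<longleftrightarrow> x < (10 * l + (d + 1)) * T"
    by (auto simp: algebra_simps)
  then show "x div T mod 10 = d \<longleftrightarrow> x < (10 * l + (d + 1)) * T"
    using digit_eq_iff_mod[OF T d, of x] by simp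
qed

lemma sum_prob_summand_full_level:
  assumes p: "p \<ge> 2" and d: "d \<le> 9"
  shows "(\<Sum>m\<in>{10 ^ (p + t - 1)..10 ^ (p + t) - 1}. prob_summand p d m) =
      (\<Sum>j\<in>{10 ^ (p - 2)..10 ^ (p - 1) - 1}.
         \<Sum>b\<in>{(10 * j + int d) * 10 ^ t..(10 * j + (int d + 1)) * 10 ^ t - 1}.
         digit_block_term p d (10 ^ t) j b)
    + (\<Sum>j\<in>{10 ^ (p - 2) - 1..10 ^ (p - 1) - 1}.
         \<Sum>a\<in>{max (10 ^ (p + t - 1)) ((10 * j + (int d + 1)) * 10 ^ t)
              ..min (10 ^ (p + t) - 1) ((10 * (j + 1) + int d) * 10 ^ t - 1)}.
         other_block_term p (10 ^ t) j a)"
proof -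
  have top: "(10::int) ^ (p + t) = 10 * 10 ^ (p - 1) * 10 ^ t"
    using p by (simp add: power_add power_Suc[symmetric])
  have lo: "(10::int) ^ (p + t - 1) \<le> 10 ^ (p + t) - 1"
    using power_strict_increasing[of "p + t - 1" "p + t" "10::int"] p by simp
  have hi: "10 ^ (p + t) - 1 < (10 * (10 ^ (p - 1) - 1 + 1) + int d) * (10::int) ^ t"
    unfolding top by (simp add: algebra_simps add_pos_nonneg)
  have "(10 * (10 ^ (p - 1) - 1) + (int d + 1)) * (10::int) ^ t \<le> 10 * 10 ^ (p - 1) * 10 ^ t"
    using d by (intro mult_right_mono) auto
  then have full: "(10 * (10 ^ (p - 1) - 1) + (int d + 1)) * (10::int) ^ t \<le> 10 ^ (p + t) - 1 + 1"
    unfolding top by simp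
  show ?thesis
    unfolding sum_prob_summand_level[OF p d lo order_refl hi]
    by (subst sum_digit_blocks_drop_min[OF _ full]) simp_all
qed

lemma sum_prob_summand_last_level:
  assumes p: "p \<ge> 2" and d: "d \<le> 9"
    and n: "10 ^ (p + t - 1) \<le> n" "n < 10 ^ (p + t)"
    and l: "l = (int n - int d * 10 ^ t) div (10 * 10 ^ t)"
  shows "(\<Sum>m\<in>{10 ^ (p + t - 1)..int n}. prob_summand p d m) =
    (if pth_digit p n = d then
       (\<Sum>j\<in>{10 ^ (p - 2)..l}.
          \<Sum>b\<in>{(10 * j + int d) * 10 ^ t..min (int n) ((10 * j + (int d + 1)) * 10 ^ t - 1)}.
          digit_block_term p d (10 ^ t) j b)
     + (\<Sum>j\<in>{10 ^ (p - 2) - 1..l - 1}.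
          \<Sum>a\<in>{max (10 ^ (p + t - 1)) ((10 * j + (int d + 1)) * 10 ^ t)
               ..(10 * (j + 1) + int d) * 10 ^ t - 1}.
          other_block_term p (10 ^ t) j a)
     else
       (\<Sum>j\<in>{10 ^ (p - 2)..l}. \<Sum>b\<in>{(10 * j + int d) * 10 ^ t..(10 * j + (int d + 1)) * 10 ^ t - 1}.
          digit_block_term p d (10 ^ t) j b)
     + (\<Sum>j\<in>{10 ^ (p - 2) - 1..l}.
          \<Sum>a\<in>{max (10 ^ (p + t - 1)) ((10 * j + (int d + 1)) * 10 ^ t)
               ..min (int n) ((10 * (j + 1) + int d) * 10 ^ t - 1)}.
          other_block_term p (10 ^ t) j a))"
proof -
  have T: "(10::int) ^ t > 0" and d': "0 \<le> int d" "int d \<le> 9" using d by simp_all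
  note block = digit_block_of[OF T d' l]
  have digit: "pth_digit p n = d \<longleftrightarrow> int n < (10 * l + (int d + 1)) * 10 ^ t"
    using int_pth_digit_eq[OF n] block(3) by (metis of_nat_eq_iff)
  have level: "(\<Sum>m\<in>{10 ^ (p + t - 1)..int n}. prob_summand p d m) =
      (\<Sum>j\<in>{10 ^ (p - 2)..l}.
         \<Sum>b\<in>{(10 * j + int d) * 10 ^ t..min (int n) ((10 * j + (int d + 1)) * 10 ^ t - 1)}.
         digit_block_term p d (10 ^ t) j b)
    + (\<Sum>j\<in>{10 ^ (p - 2) - 1..l}.
         \<Sum>a\<in>{max (10 ^ (p + t - 1)) ((10 * j + (int d + 1)) * 10 ^ t)
              ..min (int n) ((10 * (j + 1) + int d) * 10 ^ t - 1)}.
         other_block_term p (10 ^ t) j a)"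
    using n block(2)
    by (intro sum_prob_summand_level[OF p d]) (simp_all add: of_nat_less_iff flip: of_nat_le_iff)
  show ?thesis
  proof (cases "pth_digit p n = d")
    case True
    then show ?thesis
      unfolding level if_P[OF True]
      by (subst sum_other_blocks_drop_last[OF T]) (use digit block(1) in simp_all)
  next
    case False
    then show ?thesis
      unfolding level if_not_P[OF False]
      by (subst sum_digit_blocks_drop_min[OF T]) (use digit in simp_all)
  qed
qed

lemma sum_prob_summand_full_levels:
  assumes p: "p \<ge> 2" and d: "d \<le> 9" and k: "-1 \<le> k"
  shows "(\<Sum>m\<in>{10 ^ (p - 1)..10 ^ (p + nat (k + 1) - 1) - 1}. prob_summand p d m) =
    (\<Sum>i\<in>{0..k}.
       (\<Sum>j\<in>{10 ^ (p - 2)..10 ^ (p - 1) - 1}.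
          \<Sum>b\<in>{(10 * j + int d) * 10 ^ nat i..(10 * j + (int d + 1)) * 10 ^ nat i - 1}.
          digit_block_term p d (10 ^ nat i) j b)
     + (\<Sum>j\<in>{10 ^ (p - 2) - 1..10 ^ (p - 1) - 1}.
          \<Sum>a\<in>{max (10 ^ (p + nat i - 1)) ((10 * j + (int d + 1)) * 10 ^ nat i)
               ..min (10 ^ (p + nat i) - 1) ((10 * (j + 1) + int d) * 10 ^ nat i - 1)}.
          other_block_term p (10 ^ nat i) j a))"
proof -
  define s :: "int \<Rightarrow> int" where "s i = 10 ^ (p + nat i - 1)" for i
  have "mono s"
    unfolding s_def by (intro monoI power_increasing) auto
  have "(\<Sum>m\<in>{10 ^ (p - 1)..10 ^ (p + nat (k + 1) - 1) - 1}. prob_summand p d m)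
      = sum (prob_summand p d) (UNIV \<inter> {s 0..s (k + 1) - 1})"
    by (simp add: s_def)
  also have "\<dots> = (\<Sum>i\<in>{0..k}. sum (prob_summand p d) (UNIV \<inter> {s i..s (i + 1) - 1}))"
    by (rule sum_Int_blocks[OF \<open>mono s\<close>]) (use k in simp)
  also have "\<dots> = (\<Sum>i\<in>{0..k}. (\<Sum>m\<in>{10 ^ (p + nat i - 1)..10 ^ (p + nat i) - 1}. prob_summand p d m))"
  proof (rule sum.cong[OF refl])
    fix i :: int assume "i \<in> {0..k}"
    then have "nat (i + 1) = Suc (nat i)" by (simp add: nat_add_distrib)
    then show "sum (prob_summand p d) (UNIV \<inter> {s i..s (i + 1) - 1})
             = (\<Sum>m\<in>{10 ^ (p + nat i - 1)..10 ^ (p + nat i) - 1}. prob_summand p d m)"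
      using p by (simp add: s_def)
  qed
  finally show ?thesis
    by (simp only: sum_prob_summand_full_level[OF p d])
qed

lemma Pprob_eq_sum_prob_summand:
  "Pprob d n p = 1 / (real n + 1 - 10 ^ (p - 1)) * (\<Sum>m\<in>{10 ^ (p - 1)..int n}. prob_summand p d m)"
proof -
  have "{(10::int) ^ (p - 1)..int n} = int ` {10 ^ (p - 1)..n}"
    by (simp add: image_int_atLeastAtMost)
  then show ?thesis
    unfolding Pprob_def by (simp add: sum.reindex prob_summand_def)
qed

lemma exponent_bounds:
  fixes p n :: nat and k :: int
  assumes n: "10 ^ (p - 1) \<le> n"
    and k: "k = (if \<exists>i::nat. 10 ^ (i + p) \<le> n then int (Max {i::nat. 10 ^ (i + p) \<le> n}) else -1)"
  shows "-1 \<le> k" and "10 ^ (p + nat (k + 1) - 1) \<le> n" and "n < 10 ^ (p + nat (k + 1))"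
proof -
  define S where "S = {i::nat. 10 ^ (i + p) \<le> n}"
  have "-1 \<le> k \<and> 10 ^ (p + nat (k + 1) - 1) \<le> n \<and> n < 10 ^ (p + nat (k + 1))"
  proof (cases "S = {}")
    case True
    have "k = -1" using k True unfolding S_def by auto
    moreover have "0 \<notin> S" using True by simp
    then have "\<not> 10 ^ p \<le> n" unfolding S_def by simp
    ultimately show ?thesis using n by simp
  next
    case False
    have "i \<le> n" if "i \<in> S" for i
    proof -
      have "i \<le> 10 ^ i" by simp
      also have "(10::nat) ^ i \<le> 10 ^ (i + p)" by (intro power_increasing) auto
      finally show ?thesis using that unfolding S_def by simp
    qed
    then have "finite S" by (meson finite_nat_set_iff_bounded_le)
    define M where "M = Max S"
    have "10 ^ (M + p) \<le> n" using Max_in[OF \<open>finite S\<close> False] unfolding M_def S_def by simp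
    moreover have "\<not> 10 ^ (Suc M + p) \<le> n"
      using Max_ge[OF \<open>finite S\<close>, of "Suc M"] unfolding M_def S_def by auto
    moreover have "k = int M" using k False unfolding M_def S_def by auto
    then have "nat (k + 1) = Suc M" by simp
    ultimately show ?thesis by (simp add: add.commute)
  qed
  then show "-1 \<le> k" "10 ^ (p + nat (k + 1) - 1) \<le> n" "n < 10 ^ (p + nat (k + 1))" by simp_all
qed

lemma floor_block_index:
  fixes x c d T :: int
  assumes "T > 0"
  shows "\<lfloor>real_of_int (x - (10 * c + d) * T) / real_of_int (10 * T)\<rfloor> + c = (x - d * T) div (10 * T)"
proof -
  have "x - (10 * c + d) * T = (x - d * T) + (- c) * (10 * T)" by (simp add: algebra_simps)
  then show ?thesis
    using assms by (simp only: floor_divide_of_int_eq div_mult_self1)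
qed

theorem proposition1:
  fixes p d n :: nat and k l :: int
  assumes hp: "p \<ge> 2" and hd: "d \<le> 9" and hn: "n \<ge> 10 ^ (p - 1)"
    and hk: "k = (if \<exists>i::nat. 10 ^ (i + p) \<le> n
                  then int (Max {i::nat. 10 ^ (i + p) \<le> n}) else -1)"
    and hl: "l = \<lfloor>real_of_int (int n - (10 ^ (p - 1) + int d) * 10 ^ nat (k + 1))
                    / real_of_int (10 ^ nat (k + 2))\<rfloor> + 10 ^ (p - 2)"
  shows "Pprob d n p = (1 / (real n + 1 - 10 ^ (p - 1))) *
    ((\<Sum>i\<in>{0..k}.
        (\<Sum>j\<in>{(10::int) ^ (p - 2)..10 ^ (p - 1) - 1}.
           \<Sum>b\<in>{(10 * j + int d) * 10 ^ nat i..(10 * j + (int d + 1)) * 10 ^ nat i - 1}.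
             real_of_int (b - ((9 * j + int d) * 10 ^ nat i + 10 ^ (p - 2) - 1))
             / real_of_int (b + 1 - 10 ^ (p - 1)))
      + (\<Sum>j\<in>{(10::int) ^ (p - 2) - 1..10 ^ (p - 1) - 1}.
           \<Sum>a\<in>{max (10 ^ (p + nat i - 1)) ((10 * j + (int d + 1)) * 10 ^ nat i)
                 ..min (10 ^ (p + nat i) - 1) ((10 * (j + 1) + int d) * 10 ^ nat i - 1)}.
             real_of_int (10 ^ nat i * (j + 1) - 10 ^ (p - 2))
             / real_of_int (a + 1 - 10 ^ (p - 1))))
     + (if pth_digit p n = d then
          (\<Sum>j\<in>{(10::int) ^ (p - 2)..l}.
             \<Sum>b\<in>{(10 * j + int d) * 10 ^ nat (k + 1)
                   ..min (int n) ((10 * j + (int d + 1)) * 10 ^ nat (k + 1) - 1)}.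
               real_of_int (b - ((9 * j + int d) * 10 ^ nat (k + 1) + 10 ^ (p - 2) - 1))
               / real_of_int (b + 1 - 10 ^ (p - 1)))
        + (\<Sum>j\<in>{(10::int) ^ (p - 2) - 1..l - 1}.
             \<Sum>a\<in>{max (10 ^ (p + nat (k + 1) - 1)) ((10 * j + (int d + 1)) * 10 ^ nat (k + 1))
                   ..(10 * (j + 1) + int d) * 10 ^ nat (k + 1) - 1}.
               real_of_int (10 ^ nat (k + 1) * (j + 1) - 10 ^ (p - 2))
               / real_of_int (a + 1 - 10 ^ (p - 1)))
        else
          (\<Sum>j\<in>{(10::int) ^ (p - 2)..l}.
             \<Sum>b\<in>{(10 * j + int d) * 10 ^ nat (k + 1)
                   ..(10 * j + (int d + 1)) * 10 ^ nat (k + 1) - 1}.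
               real_of_int (b - ((9 * j + int d) * 10 ^ nat (k + 1) + 10 ^ (p - 2) - 1))
               / real_of_int (b + 1 - 10 ^ (p - 1)))
        + (\<Sum>j\<in>{(10::int) ^ (p - 2) - 1..l}.
             \<Sum>a\<in>{max (10 ^ (p + nat (k + 1) - 1)) ((10 * j + (int d + 1)) * 10 ^ nat (k + 1))
                   ..min (int n) ((10 * (j + 1) + int d) * 10 ^ nat (k + 1) - 1)}.
               real_of_int (10 ^ nat (k + 1) * (j + 1) - 10 ^ (p - 2))
               / real_of_int (a + 1 - 10 ^ (p - 1)))))"
proof -
  note k = exponent_bounds[OF hn hk]
  have "nat (k + 2) = Suc (nat (k + 1))" using k(1) by arith
  then have powers: "(10::int) ^ (p - 1) = 10 * 10 ^ (p - 2)"
      "(10::int) ^ nat (k + 2) = 10 * 10 ^ nat (k + 1)"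
    using power_ten_shift[OF hp, where 'a = int, of 0] by simp_all
  have l: "l = (int n - int d * 10 ^ nat (k + 1)) div (10 * 10 ^ nat (k + 1))"
    unfolding hl powers by (rule floor_block_index) simp
  have "(10::int) ^ (p - 1) \<le> 10 ^ (p + nat (k + 1) - 1)" by (intro power_increasing) auto
  moreover have "(10::int) ^ (p + nat (k + 1) - 1) \<le> int n + 1"
    using k(2) by (metis of_nat_le_iff of_nat_numeral of_nat_power add_increasing2 zero_le_one)
  ultimately have split: "(\<Sum>m\<in>{10 ^ (p - 1)..int n}. prob_summand p d m)
      = (\<Sum>m\<in>{10 ^ (p - 1)..10 ^ (p + nat (k + 1) - 1) - 1}. prob_summand p d m)
      + (\<Sum>m\<in>{10 ^ (p + nat (k + 1) - 1)..int n}. prob_summand p d m)"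
    by (rule sum_Int_atLeastAtMost_split[where S = UNIV, simplified])
  show ?thesis
    unfolding Pprob_eq_sum_prob_summand split sum_prob_summand_full_levels[OF hp hd k(1)]
      sum_prob_summand_last_level[OF hp hd k(2,3) l]
      digit_block_term_def[abs_def] other_block_term_def[abs_def] ..
qed

end
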